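(* Let $G=(V,E)$ be a $k$-uniform cored hypergraph ($k\ge3$) and let $\mathbf x\in\mathbb R^n$ be an H-eigenvector of its Laplacian tensor $\mathcal L$ corresponding to an H-eigenvalue $\lambda\neq1$. If $i,j$ are two cored vertices lying in a common edge $e\in E$, then $|x_i|=|x_j|$; moreover $x_i=x_j$ when $k$ is odd.
   Context: A $k$-uniform hypergraph $G=(V,E)$ has $V=[n]$ and a nonempty set $E$ of $k$-element subsets of $V$; $d_i$ is the number of edges containing $i$. A cored vertex is a vertex of degree one; $G$ is cored if every edge contains a cored vertex. The Laplacian tensor $\mathcal L=\mathcal D-\mathcal A$ ($\mathcal D$ diagonal with entries $d_i$, $\mathcal A$ with entries $\frac1{(k-1)!}$ at index tuples forming an edge and $0$ otherwise) satisfies $(\mathcal L\mathbf x^{k-1})_i=d_ix_i^{k-1}-\sum_{e\in E,\,i\in e}\prod_{s\in e\setminus\{i\}}x_s$. A real $\lambda$ is an H-eigenvalue with H-eigenvector $\mathbf x\neq0$ if $(\mathcal L\mathbf x^{k-1})_i=\lambda x_i^{k-1}$ for all $i$. *)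

theory Defs
  imports "HOL-Analysis.Analysis"
begin

definition uniform_hypergraph :: "nat \<Rightarrow> nat \<Rightarrow> nat set set \<Rightarrow> bool" where
  "uniform_hypergraph n k E \<longleftrightarrow> E \<noteq> {} \<and> (\<forall>e\<in>E. e \<subseteq> {1..n} \<and> card e = k)"

definition hdegree :: "nat set set \<Rightarrow> nat \<Rightarrow> nat" where
  "hdegree E i = card {e\<in>E. i \<in> e}"

definition cored_vertex :: "nat set set \<Rightarrow> nat \<Rightarrow> bool" where
  "cored_vertex E i \<longleftrightarrow> hdegree E i = 1"

definition cored :: "nat set set \<Rightarrow> bool" where
  "cored E \<longleftrightarrow> (\<forall>e\<in>E. \<exists>i\<in>e. cored_vertex E i)"

text \<open>The i-th component of L x^(k-1) for the Laplacian tensor L = D - A.\<close>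
definition laplacian_apply :: "nat set set \<Rightarrow> nat \<Rightarrow> (nat \<Rightarrow> real) \<Rightarrow> nat \<Rightarrow> real" where
  "laplacian_apply E k x i =
     real (hdegree E i) * x i ^ (k - 1) - (\<Sum>e\<in>{e\<in>E. i \<in> e}. \<Prod>s\<in>e - {i}. x s)"

definition H_eigenpair :: "nat \<Rightarrow> nat \<Rightarrow> nat set set \<Rightarrow> real \<Rightarrow> (nat \<Rightarrow> real) \<Rightarrow> bool" where
  "H_eigenpair n k E lam x \<longleftrightarrow>
     (\<exists>i\<in>{1..n}. x i \<noteq> 0) \<and>
     (\<forall>i\<in>{1..n}. laplacian_apply E k x i = lam * x i ^ (k - 1))"

end

theory Submission
  imports Defs
begin

text \<open>At a cored vertex \<open>i\<close> of an edge \<open>e\<close> the eigen-equation has a single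
  adjacency term, so multiplying it by \<open>x\<^sub>i\<close> gives
  \<open>(1 - \<lambda>) x\<^sub>i\<^sup>k = \<Prod>\<^sub>s\<^sub>\<in>\<^sub>e x\<^sub>s\<close>. The right-hand side does not depend on the
  choice of the cored vertex, hence for \<open>\<lambda> \<noteq> 1\<close> any two cored vertices of
  \<open>e\<close> satisfy \<open>x\<^sub>i\<^sup>k = x\<^sub>j\<^sup>k\<close>.\<close>

lemma cored_vertex_incident_edges:
  assumes "cored_vertex E i" and "e \<in> E" and "i \<in> e"
  shows "{f \<in> E. i \<in> f} = {e}"
proof -
  have "card {f \<in> E. i \<in> f} = 1"
    using assms(1) unfolding cored_vertex_def hdegree_def .
  then obtain f where "{f \<in> E. i \<in> f} = {f}"
    using card_1_singletonE by blast
  with assms(2,3) show ?thesis by auto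
qed

lemma laplacian_apply_cored_vertex:
  assumes "cored_vertex E i" and "e \<in> E" and "i \<in> e"
  shows "laplacian_apply E k x i = x i ^ (k - 1) - (\<Prod>s\<in>e - {i}. x s)"
  using assms unfolding laplacian_apply_def cored_vertex_incident_edges[OF assms]
  by (simp add: cored_vertex_def)

lemma H_eigenpair_cored_vertex_edge_product:
  assumes "uniform_hypergraph n k E" and "k > 0" and "H_eigenpair n k E lam x"
    and "cored_vertex E i" and "e \<in> E" and "i \<in> e"
  shows "(1 - lam) * x i ^ k = (\<Prod>s\<in>e. x s)"
proof -
  have "e \<subseteq> {1..n}" and "card e = k"
    using assms(1,5) unfolding uniform_hypergraph_def by auto
  with assms(2,6) have "finite e" and "i \<in> {1..n}"
    by (auto intro: card_ge_0_finite)
  have "laplacian_apply E k x i = lam * x i ^ (k - 1)"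
    using assms(3) \<open>i \<in> {1..n}\<close> unfolding H_eigenpair_def by blast
  then have "x i ^ (k - 1) - (\<Prod>s\<in>e - {i}. x s) = lam * x i ^ (k - 1)"
    unfolding laplacian_apply_cored_vertex[OF assms(4-6)] .
  then have edge_term: "(\<Prod>s\<in>e - {i}. x s) = (1 - lam) * x i ^ (k - 1)"
    by (simp add: algebra_simps)
  have "(\<Prod>s\<in>e. x s) = x i * (\<Prod>s\<in>e - {i}. x s)"
    using \<open>finite e\<close> assms(6) by (simp add: prod.remove)
  also have "\<dots> = (1 - lam) * (x i * x i ^ (k - 1))"
    by (simp add: edge_term)
  also have "x i * x i ^ (k - 1) = x i ^ k"
    using assms(2) by (simp flip: power_Suc)
  finally show ?thesis ..
qed

lemma abs_eq_if_power_eq: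
  fixes a b :: real
  assumes "a ^ k = b ^ k" and "k > 0"
  shows "\<bar>a\<bar> = \<bar>b\<bar>"
  using assms power_eq_iff_eq_base[of k "\<bar>a\<bar>" "\<bar>b\<bar>"] by (simp flip: power_abs)

lemma eq_if_power_eq_odd:
  fixes a b :: real
  assumes "a ^ k = b ^ k" and "odd k"
  shows "a = b"
  by (metis assms odd_real_root_power_cancel)

theorem lemma3p1:
  fixes n k :: nat and E :: "nat set set" and x :: "nat \<Rightarrow> real" and lam :: real
    and i j :: nat and e :: "nat set"
  assumes "uniform_hypergraph n k E" and "cored E" and "k \<ge> 3"
    and "H_eigenpair n k E lam x" and "lam \<noteq> 1"
    and "e \<in> E" and "i \<in> e" and "j \<in> e"
    and "cored_vertex E i" and "cored_vertex E j"
  shows "\<bar>x i\<bar> = \<bar>x j\<bar> \<and> (odd k \<longrightarrow> x i = x j)"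
proof -
  have "k > 0" using assms(3) by simp
  have "(1 - lam) * x i ^ k = (1 - lam) * x j ^ k"
    using H_eigenpair_cored_vertex_edge_product[OF assms(1) \<open>k > 0\<close> assms(4)]
      assms(6-10) by simp
  then have "x i ^ k = x j ^ k"
    using assms(5) by simp
  then show ?thesis
    using abs_eq_if_power_eq \<open>k > 0\<close> eq_if_power_eq_odd by blast
qed

end
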